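(* Let $M$ be a term of the CCV $\lambda\mu$-calculus. The call-by-value evaluation of $M$ terminates if and only if the CPS translation $[\![M]\!]$ is solvable (as an untyped $\lambda$-term, i.e., it is $\beta$-convertible to a head normal form).
   Context: CCV $\lambda\mu$-calculus syntax. Ordinary variables $x,y,z,\dots$ and continuation variables $k,l,m,\dots$ are disjoint. Terms $M ::= x \mid \lambda x.M \mid MM \mid (M\ \mathsf{where}\ x:=M) \mid \mu k.J$, jumps $J ::= [k]M \mid (J\ \mathsf{where}\ x:=M)$, where $(L\ \mathsf{where}\ x:=M)$ means $\mathsf{let}\ x=M\ \mathsf{in}\ L$ ($x$ bound in $L$ only); $\lambda x$ and $\mu k$ bind as usual. Values $V$ are variables and $\lambda$-abstractions. For the operational semantics, terms are syntax trees up to $\alpha$-conversion only, except that $[k](L\ \mathsf{where}\ x:=M)$ and $([k]L\ \mathsf{where}\ x:=M)$ are identified and read as $[k](L\ \mathsf{where}\ x:=M)$; in particular $((\mu k.J)\ \mathsf{where}\ x:=M)$ is distinguished from $\mu k.(J\ \mathsf{where}\ x:=M)$, and $((L\ \mathsf{where}\ x:=M)\ \mathsf{where}\ y:=N)$ from $(L\ \mathsf{where}\ x:=(M\ \mathsf{where}\ y:=N))$. Context substitution $J\{[k]\square\mapsto[k](M\ \mathsf{where}\ x:=\square)\}$ replaces recursively each subjump $[k]Q$ of $J$ with $k$ free by $[k](M\ \mathsf{where}\ x:=Q)$ (capture-avoiding); $J\{l/m\}$ replaces each such $[m]Q$ by $[l]Q$. Evaluation contexts: $E ::= \square \mid E[V\square]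 \mid E[\square M] \mid E[(M\ \mathsf{where}\ x:=\square)]$. $E_0$-rewriting ($z$ fresh): $E[(\mu k.J)M]\to E[(zM\ \mathsf{where}\ z:=\mu k.J)]$; $E[V(\mu k.J)]\to E[(Vz\ \mathsf{where}\ z:=\mu k.J)]$; $E[(\lambda x.M)V]\to E[(M\ \mathsf{where}\ x:=V)]$; $E[(M\ \mathsf{where}\ x:=V)]\to E[M\{V/x\}]$; $E[(M\ \mathsf{where}\ x:=\mu k.J)]\to E[\mu k.J\{[k]\square\mapsto[k](M\ \mathsf{where}\ x:=\square)\}]$. $E$-rewriting $\to_E$ is given by: $\mu k.[l]\mu m.J\to_E\mu k.J\{l/m\}$; if $L\to_{E_0}M$ then $L\to_E M$; if $L\to_{E_0}M$ then $\mu k.[l]L\to_E\mu k.[l]M$. A term is $E$-normal if no $E$-rewriting applies to it. The call-by-value evaluation of $M$ terminates if $M\to_E^* N$ for some $E$-normal $N$. Target calculus: sorted $\lambda$-calculus $T::=\lambda k.Q\mid WW$, $Q::=KW\mid TK$, $W::=x\mid\lambda x.T$, $K::=k\mid\lambda x.Q$. CPS translation ($N$ a non-value, fresh bound variables): $\langle V\rangle[K]=KV^*$; $\langle V_1V_2\rangle[K]=V_1^*V_2^*K$; $\langle VN\rangle[K]=\langle N\rangle[\lambda y.V^*yK]$; $\langle NV\rangle[K]=\langle N\rangle[\lambda x.xV^*K]$; $\langle N_1N_2\rangle[K]=\langle N_1\rangle[\lambda x.\langle N_2\rangle[\lambda y.xyK]]$; $\langle (L\ \mathsf{where}\ x:=M)\rangle[K]=\langle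 M\rangle[\lambda x.\langle L\rangle[K]]$ (renaming $x$ if free in $K$); $\langle\mu k.J\rangle[K]=(\lambda k.\langle J\rangle)K$; $\langle[k]M\rangle=\langle M\rangle[k]$; $\langle (J\ \mathsf{where}\ x:=M)\rangle=\langle M\rangle[\lambda x.\langle J\rangle]$; $x^*=x$; $(\lambda x.M)^*=\lambda xk.\langle M\rangle[k]$; $[\![M]\!]=\lambda k.\langle M\rangle[k]$. *)

theory Defs
  imports Main
begin

text \<open>Ordinary variables and continuation variables live in two separate
de Bruijn index spaces.  An ordinary index counts the ordinary binders
(lambda x, and the binder x of (L where x:=M), which scopes over L only);
a continuation index counts the mu-binders.  Since [k](L where x:=M) and ([k]L where x:=M) are
identified and read as [k](L where x:=M), every jump is identified with
one of the form [k]M; we use these as canonical representatives, so a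
jump (J where x:=M) with J = [k]L is represented by Jump k (Where L M).\<close>

datatype trm =
    Var nat
  | Lam trm
  | App trm trm
  | Where trm trm      \<comment> \<open>Where L M = (L where x:=M), x bound (index 0) in L\<close>
  | Mu jmp             \<comment> \<open>mu k. J, k bound (continuation index 0) in J\<close>
and jmp =
    Jump nat trm

fun is_val :: "trm \<Rightarrow> bool" where
  "is_val (Var _) = True"
| "is_val (Lam _) = True"
| "is_val _ = False"

definition ext :: "(nat \<Rightarrow> nat) \<Rightarrow> nat \<Rightarrow> nat" where
  "ext f n = (case n of 0 \<Rightarrow> 0 | Suc m \<Rightarrow> Suc (f m))"

fun omap :: "(nat \<Rightarrow> nat) \<Rightarrow> trm \<Rightarrow> trm"
and omapj :: "(nat \<Rightarrow> nat) \<Rightarrow> jmp \<Rightarrow> jmp" where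
  "omap f (Var n) = Var (f n)"
| "omap f (Lam t) = Lam (omap (ext f) t)"
| "omap f (App s t) = App (omap f s) (omap f t)"
| "omap f (Where s t) = Where (omap (ext f) s) (omap f t)"
| "omap f (Mu J) = Mu (omapj f J)"
| "omapj f (Jump l t) = Jump l (omap f t)"

fun kmap :: "(nat \<Rightarrow> nat) \<Rightarrow> trm \<Rightarrow> trm"
and kmapj :: "(nat \<Rightarrow> nat) \<Rightarrow> jmp \<Rightarrow> jmp" where
  "kmap f (Var n) = Var n"
| "kmap f (Lam t) = Lam (kmap f t)"
| "kmap f (App s t) = App (kmap f s) (kmap f t)"
| "kmap f (Where s t) = Where (kmap f s) (kmap f t)"
| "kmap f (Mu J) = Mu (kmapj (ext f) J)"
| "kmapj f (Jump l t) = Jump (f l) (kmap f t)"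

definition exts :: "(nat \<Rightarrow> trm) \<Rightarrow> nat \<Rightarrow> trm" where
  "exts \<sigma> n = (case n of 0 \<Rightarrow> Var 0 | Suc m \<Rightarrow> omap Suc (\<sigma> m))"

fun osub :: "(nat \<Rightarrow> trm) \<Rightarrow> trm \<Rightarrow> trm"
and osubj :: "(nat \<Rightarrow> trm) \<Rightarrow> jmp \<Rightarrow> jmp" where
  "osub \<sigma> (Var n) = \<sigma> n"
| "osub \<sigma> (Lam t) = Lam (osub (exts \<sigma>) t)"
| "osub \<sigma> (App s t) = App (osub \<sigma> s) (osub \<sigma> t)"
| "osub \<sigma> (Where s t) = Where (osub (exts \<sigma>) s) (osub \<sigma> t)"
| "osub \<sigma> (Mu J) = Mu (osubj (kmap Suc \<circ> \<sigma>) J)"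
| "osubj \<sigma> (Jump l t) = Jump l (osub \<sigma> t)"

definition subst0 :: "trm \<Rightarrow> trm \<Rightarrow> trm" where
  "subst0 M V = osub (\<lambda>n. case n of 0 \<Rightarrow> V | Suc m \<Rightarrow> Var m) M"

text \<open>Context substitution J{[k]\<box> \<mapsto> [k](M where x:=\<box>)}:
csj M k J replaces recursively every subjump [k]Q of J (k free) by
[k](M where x:=Q).  Here M has x as its ordinary index 0; its other free
variables are shifted when going under binders (capture avoidance).\<close>
fun cs :: "trm \<Rightarrow> nat \<Rightarrow> trm \<Rightarrow> trm"
and csj :: "trm \<Rightarrow> nat \<Rightarrow> jmp \<Rightarrow> jmp" where
  "cs M k (Var n) = Var n"
| "cs M k (Lam t) = Lam (cs (omap (ext Suc) M) k t)"
| "cs M k (App s t) = App (cs M k s) (cs M k t)"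
| "cs M k (Where s t) = Where (cs (omap (ext Suc) M) k s) (cs M k t)"
| "cs M k (Mu J) = Mu (csj (kmap Suc M) (Suc k) J)"
| "csj M k (Jump l Q) =
     (if l = k then Jump l (Where M (cs M k Q)) else Jump l (cs M k Q))"

text \<open>J{l/m} for the innermost mu-bound m (index 0), removing that binder.\<close>
definition kren0 :: "nat \<Rightarrow> jmp \<Rightarrow> jmp" where
  "kren0 l J = kmapj (\<lambda>n. case n of 0 \<Rightarrow> l | Suc m \<Rightarrow> m) J"

text \<open>E_0-rewriting: the five rules closed under evaluation contexts
E ::= \<box> | E[V\<box>] | E[\<box>M] | E[(M where x:=\<box>)].\<close>
inductive E0 :: "trm \<Rightarrow> trm \<Rightarrow> bool" where
  mu_app: "E0 (App (Mu J) M) (Where (App (Var 0) (omap Suc M)) (Mu J))"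
| app_mu: "is_val V \<Longrightarrow> E0 (App V (Mu J)) (Where (App (omap Suc V) (Var 0)) (Mu J))"
| beta_v: "is_val V \<Longrightarrow> E0 (App (Lam M) V) (Where M V)"
| where_v: "is_val V \<Longrightarrow> E0 (Where M V) (subst0 M V)"
| where_mu: "E0 (Where M (Mu J)) (Mu (csj (kmap Suc M) 0 J))"
| ctx_argR: "is_val V \<Longrightarrow> E0 L L' \<Longrightarrow> E0 (App V L) (App V L')"
| ctx_funL: "E0 L L' \<Longrightarrow> E0 (App L M) (App L' M)"
| ctx_where: "E0 L L' \<Longrightarrow> E0 (Where M L) (Where M L')"

inductive Estep :: "trm \<Rightarrow> trm \<Rightarrow> bool" where
  rename: "Estep (Mu (Jump l (Mu J))) (Mu (kren0 l J))"
| top: "E0 L M \<Longrightarrow> Estep L M"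
| under_mu: "E0 L M \<Longrightarrow> Estep (Mu (Jump l L)) (Mu (Jump l M))"

definition E_normal :: "trm \<Rightarrow> bool" where
  "E_normal M \<longleftrightarrow> \<not> (\<exists>N. Estep M N)"

definition cbv_terminates :: "trm \<Rightarrow> bool" where
  "cbv_terminates M \<longleftrightarrow> (\<exists>N. Estep\<^sup>*\<^sup>* M N \<and> E_normal N)"

datatype lterm = LVar nat | LLam lterm | LApp lterm lterm

fun lift :: "nat \<Rightarrow> lterm \<Rightarrow> lterm" where
  "lift k (LVar i) = (if i < k then LVar i else LVar (Suc i))"
| "lift k (LLam t) = LLam (lift (Suc k) t)"
| "lift k (LApp s t) = LApp (lift k s) (lift k t)"

fun lsubst :: "lterm \<Rightarrow> lterm \<Rightarrow> nat \<Rightarrow> lterm" where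
  "lsubst (LVar i) s k = (if k < i then LVar (i - 1) else if i = k then s else LVar i)"
| "lsubst (LLam t) s k = LLam (lsubst t (lift 0 s) (Suc k))"
| "lsubst (LApp t u) s k = LApp (lsubst t s k) (lsubst u s k)"

inductive beta :: "lterm \<Rightarrow> lterm \<Rightarrow> bool" where
  redex: "beta (LApp (LLam s) t) (lsubst s t 0)"
| appL: "beta s s' \<Longrightarrow> beta (LApp s t) (LApp s' t)"
| appR: "beta t t' \<Longrightarrow> beta (LApp s t) (LApp s t')"
| abs: "beta s s' \<Longrightarrow> beta (LLam s) (LLam s')"

fun head_var :: "lterm \<Rightarrow> bool" where
  "head_var (LVar _) = True"
| "head_var (LApp s _) = head_var s"
| "head_var (LLam _) = False"

fun hnf :: "lterm \<Rightarrow> bool" where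
  "hnf (LLam t) = hnf t"
| "hnf t = head_var t"

definition solvable :: "lterm \<Rightarrow> bool" where
  "solvable t \<longleftrightarrow> (\<exists>u. equivclp beta t u \<and> hnf u)"

text \<open>ro / rk map free ordinary / continuation variables of the source term
to target de Bruijn indices; K is a target term in the current target scope.
cps ro rk M K = <M>[K], cpsj ro rk J = <J>, vstar ro rk V = V*.\<close>
fun cps :: "(nat \<Rightarrow> nat) \<Rightarrow> (nat \<Rightarrow> nat) \<Rightarrow> trm \<Rightarrow> lterm \<Rightarrow> lterm"
and cpsj :: "(nat \<Rightarrow> nat) \<Rightarrow> (nat \<Rightarrow> nat) \<Rightarrow> jmp \<Rightarrow> lterm"
and vstar :: "(nat \<Rightarrow> nat) \<Rightarrow> (nat \<Rightarrow> nat) \<Rightarrow> trm \<Rightarrow> lterm" where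
  "vstar ro rk (Var n) = LVar (ro n)"
| "vstar ro rk (Lam M) =
     LLam (LLam (cps (Suc \<circ> ext ro) (\<lambda>n. Suc (Suc (rk n))) M (LVar 0)))"
| "vstar ro rk (App s t) = LVar 0"
| "vstar ro rk (Where s t) = LVar 0"
| "vstar ro rk (Mu J) = LVar 0"
| "cps ro rk (Var n) K = LApp K (vstar ro rk (Var n))"
| "cps ro rk (Lam M) K = LApp K (vstar ro rk (Lam M))"
| "cps ro rk (App s t) K =
     (if is_val s \<and> is_val t then LApp (LApp (vstar ro rk s) (vstar ro rk t)) K
      else if is_val s then
        cps ro rk t (LLam (LApp (LApp (vstar (Suc \<circ> ro) (Suc \<circ> rk) s) (LVar 0)) (lift 0 K)))
      else if is_val t then
        cps ro rk s (LLam (LApp (LApp (LVar 0) (vstar (Suc \<circ> ro) (Suc \<circ> rk) t)) (lift 0 K)))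
      else
        cps ro rk s (LLam (cps (Suc \<circ> ro) (Suc \<circ> rk) t
           (LLam (LApp (LApp (LVar 1) (LVar 0)) (lift 0 (lift 0 K)))))))"
| "cps ro rk (Where L M) K = cps ro rk M (LLam (cps (ext ro) (Suc \<circ> rk) L (lift 0 K)))"
| "cps ro rk (Mu J) K = LApp (LLam (cpsj (Suc \<circ> ro) (ext rk) J)) K"
| "cpsj ro rk (Jump k M) = cps ro rk M (LVar (rk k))"

text \<open>[[M]] = \<lambda>k. <M>[k]; free ordinary variable n and free continuation
variable n of M are sent to distinct target variables (2n and 2n+1).\<close>
definition CPS :: "trm \<Rightarrow> lterm" where
  "CPS M = LLam (cps (\<lambda>n. Suc (2 * n)) (\<lambda>n. Suc (2 * n + 1)) M (LVar 0))"

end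

(* The CPS image of an evaluation step is simulated by head reduction: the images of M and of
   its successor N have a common head reduct, which the image of N reaches in at most as
   many head steps as the image of M, and in strictly fewer unless the step was administrative,
   in which case a lexicographic size of the source term decreases.  Head reduction being
   deterministic, the number of head steps to head normal form thus decreases along evaluation
   in the lexicographic order with that size, so evaluation of a term whose image
   head-normalizes terminates.  By Church-Rosser and standardization, a solvable term
   head-normalizes.  Conversely, evaluation steps preserve beta-convertibility of the images,
   and the image of an E-normal term reaches a head normal form in at most one head step. *)

theory Submission
  imports Defs "HOL-Library.Confluence" "HOL-Library.Product_Lexorder"
begin

lemma lift_lift:
  "i \<le> k \<Longrightarrow> lift (Suc k) (lift i t) = lift i (lift k t)"
  by (induct t arbitrary: i k) auto

lemma lift_subst:
  "j \<le> i \<Longrightarrow> lift i (lsubst t s j) = lsubst (lift (Suc i) t) (lift i s) j"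
  by (induct t arbitrary: i j s) (simp_all add: diff_Suc lift_lift split: nat.split)

lemma lift_subst_lt:
  "i \<le> j \<Longrightarrow> lift i (lsubst t s j) = lsubst (lift i t) (lift i s) (Suc j)"
  by (induct t arbitrary: i j s) (auto simp: lift_lift)

lemma subst_lift [simp]: "lsubst (lift k t) s k = t"
  by (induct t arbitrary: k s) simp_all

lemma subst_subst:
  "i \<le> j \<Longrightarrow> lsubst (lsubst t (lift i v) (Suc j)) (lsubst u v j) i = lsubst (lsubst t u i) v j"
  by (induct t arbitrary: i j u v)
    (simp_all add: diff_Suc lift_lift [symmetric] lift_subst_lt split: nat.split)

lemma lift0_lift [simp]: "lift (Suc j) (lift 0 t) = lift 0 (lift j t)"
  using lift_lift[of 0 j t] by simp

lemma subst_Suc_lift0 [simp]: "lsubst (lift 0 t) (lift 0 s) (Suc j) = lift 0 (lsubst t s j)"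
  using lift_subst_lt[of 0 j t s] by simp

lemma betas_LLam: "beta\<^sup>*\<^sup>* s s' \<Longrightarrow> beta\<^sup>*\<^sup>* (LLam s) (LLam s')"
  by (induct rule: rtranclp_induct) (auto intro: rtranclp.rtrancl_into_rtrancl beta.abs)

lemma betas_appL: "beta\<^sup>*\<^sup>* s s' \<Longrightarrow> beta\<^sup>*\<^sup>* (LApp s t) (LApp s' t)"
  by (induct rule: rtranclp_induct) (auto intro: rtranclp.rtrancl_into_rtrancl beta.appL)

lemma betas_appR: "beta\<^sup>*\<^sup>* t t' \<Longrightarrow> beta\<^sup>*\<^sup>* (LApp s t) (LApp s t')"
  by (induct rule: rtranclp_induct) (auto intro: rtranclp.rtrancl_into_rtrancl beta.appR)

lemma betas_LApp: "beta\<^sup>*\<^sup>* s s' \<Longrightarrow> beta\<^sup>*\<^sup>* t t' \<Longrightarrow> beta\<^sup>*\<^sup>* (LApp s t) (LApp s' t')"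
  by (meson betas_appL betas_appR rtranclp_trans)

subsection \<open>Confluence of beta-reduction\<close>

inductive pbeta :: "lterm \<Rightarrow> lterm \<Rightarrow> bool" where
  pbeta_Var: "pbeta (LVar n) (LVar n)"
| pbeta_LLam: "pbeta s t \<Longrightarrow> pbeta (LLam s) (LLam t)"
| pbeta_LApp: "pbeta s s' \<Longrightarrow> pbeta t t' \<Longrightarrow> pbeta (LApp s t) (LApp s' t')"
| pbeta_redex: "pbeta s s' \<Longrightarrow> pbeta t t' \<Longrightarrow> pbeta (LApp (LLam s) t) (lsubst s' t' 0)"

inductive_cases pbeta_VarE: "pbeta (LVar n) t"
inductive_cases pbeta_LLamE: "pbeta (LLam s) t"
inductive_cases pbeta_LAppE: "pbeta (LApp s t) u"

lemma pbeta_refl [simp]: "pbeta t t"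
  by (induct t) (auto intro: pbeta.intros)

lemma beta_imp_pbeta: "beta s t \<Longrightarrow> pbeta s t"
  by (induct rule: beta.induct) (auto intro: pbeta.intros)

lemma pbeta_imp_betas: "pbeta s t \<Longrightarrow> beta\<^sup>*\<^sup>* s t"
  by (induct rule: pbeta.induct)
    (auto intro: betas_LLam betas_LApp rtranclp.rtrancl_into_rtrancl beta.redex)

lemma pbeta_lift: "pbeta t t' \<Longrightarrow> pbeta (lift n t) (lift n t')"
  by (induct arbitrary: n rule: pbeta.induct) (auto intro: pbeta.intros simp: lift_subst)

lemma pbeta_subst: "pbeta t t' \<Longrightarrow> pbeta s s' \<Longrightarrow> pbeta (lsubst t s n) (lsubst t' s' n)"
proof (induct arbitrary: s s' n rule: pbeta.induct)
  case (pbeta_redex a a' b b')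
  then have "pbeta (LApp (LLam (lsubst a (lift 0 s) (Suc n))) (lsubst b s n))
     (lsubst (lsubst a' (lift 0 s') (Suc n)) (lsubst b' s' n) 0)"
    by (intro pbeta.pbeta_redex) (auto intro: pbeta_lift)
  then show ?case by (simp add: subst_subst[of 0, simplified])
qed (auto intro!: pbeta.intros simp: pbeta_lift)

fun complete_dev :: "lterm \<Rightarrow> lterm" where
  "complete_dev (LVar n) = LVar n"
| "complete_dev (LLam s) = LLam (complete_dev s)"
| "complete_dev (LApp (LLam u) t) = lsubst (complete_dev u) (complete_dev t) 0"
| "complete_dev (LApp s t) = LApp (complete_dev s) (complete_dev t)"

lemma pbeta_complete_dev: "pbeta s t \<Longrightarrow> pbeta t (complete_dev s)"
proof (induct s arbitrary: t rule: complete_dev.induct)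
  case (3 u v)
  from \<open>pbeta (LApp (LLam u) v) t\<close> show ?case
  proof (rule pbeta_LAppE)
    fix a b assume "t = LApp a b" "pbeta (LLam u) a" "pbeta v b"
    with 3 show ?thesis by (auto elim!: pbeta_LLamE intro!: pbeta_redex)
  next
    fix a a' b' assume "LLam u = LLam a" "t = lsubst a' b' 0" "pbeta a a'" "pbeta v b'"
    with 3 show ?thesis by (auto intro!: pbeta_subst)
  qed
qed (auto elim!: pbeta_VarE pbeta_LLamE pbeta_LAppE intro!: pbeta.intros)

lemma confluentp_beta: "confluentp beta"
proof -
  have "strong_confluentp pbeta"
    by (rule strong_confluentpI) (metis pbeta_complete_dev r_into_rtranclp sup2I1)
  then have "confluentp pbeta" by (rule strong_confluentp_imp_confluentp)
  moreover have "pbeta\<^sup>*\<^sup>* = beta\<^sup>*\<^sup>*"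
  proof (intro ext iffI)
    show "beta\<^sup>*\<^sup>* x y" if "pbeta\<^sup>*\<^sup>* x y" for x y
      using that by induct (auto intro: rtranclp_trans dest: pbeta_imp_betas)
    show "pbeta\<^sup>*\<^sup>* x y" if "beta\<^sup>*\<^sup>* x y" for x y
      using that by induct (auto intro: rtranclp.rtrancl_into_rtrancl beta_imp_pbeta)
  qed
  ultimately show ?thesis by (metis confluentpD confluentpI)
qed

lemma beta_Church_Rosser: "equivclp beta t u \<Longrightarrow> \<exists>d. beta\<^sup>*\<^sup>* t d \<and> beta\<^sup>*\<^sup>* u d"
  using semiconfluentp_equivclp[OF confluentp_imp_semiconfluentp[OF confluentp_beta]]
  by (auto simp: rtranclp_conversep)

inductive hstep :: "lterm \<Rightarrow> lterm \<Rightarrow> bool" where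
  hstep_redex: "hstep (LApp (LLam s) t) (lsubst s t 0)"
| hstep_app: "hstep s s' \<Longrightarrow> (\<forall>b. s \<noteq> LLam b) \<Longrightarrow> hstep (LApp s t) (LApp s' t)"
| hstep_LLam: "hstep s s' \<Longrightarrow> hstep (LLam s) (LLam s')"

lemma hstep_redex_eq: "u = lsubst s t 0 \<Longrightarrow> hstep (LApp (LLam s) t) u"
  by (simp add: hstep_redex)

lemma hstep_imp_beta: "hstep t u \<Longrightarrow> beta t u"
  by (induct rule: hstep.induct) (auto intro: beta.intros)

lemma hsteps_imp_betas: "hstep\<^sup>*\<^sup>* t u \<Longrightarrow> beta\<^sup>*\<^sup>* t u"
  by (induct rule: rtranclp_induct) (auto dest: hstep_imp_beta)

lemma hnf_if_head_var: "head_var t \<Longrightarrow> hnf t"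
  by (cases t) auto

lemma hnf_imp_no_hstep: "hstep t u \<Longrightarrow> \<not> hnf t"
proof (induct rule: hstep.induct)
  case (hstep_app s s' t)
  then have "\<not> head_var s" using hnf_if_head_var by blast
  then show ?case by simp
qed auto

lemma hstep_deterministic: "hstep t u \<Longrightarrow> hstep t v \<Longrightarrow> u = v"
proof (induct arbitrary: v rule: hstep.induct)
  case (hstep_redex s t)
  then show ?case by (auto elim: hstep.cases)
next
  case (hstep_app s s' t)
  from \<open>hstep (LApp s t) v\<close> show ?case
  proof (cases rule: hstep.cases)
    case hstep_redex
    with \<open>\<forall>b. s \<noteq> LLam b\<close> show ?thesis by auto
  next
    case (hstep_app s'')
    with hstep_app.hyps(2) show ?thesis by auto
  qed
next
  case (hstep_LLam s s')
  from \<open>hstep (LLam s) v\<close> show ?case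
    by (cases rule: hstep.cases) (auto dest: hstep_LLam.hyps(2))
qed

lemma hsteps_LLam: "hstep\<^sup>*\<^sup>* s s' \<Longrightarrow> hstep\<^sup>*\<^sup>* (LLam s) (LLam s')"
  by (induct rule: rtranclp_induct) (auto intro: rtranclp.rtrancl_into_rtrancl hstep_LLam)

lemma head_var_beta: "beta s s' \<Longrightarrow> head_var s \<Longrightarrow> head_var s'"
  by (induct rule: beta.induct) auto

lemma hnf_beta: "beta t u \<Longrightarrow> hnf t \<Longrightarrow> hnf u"
  by (induct rule: beta.induct) (auto intro: head_var_beta)

lemma hnf_betas: "beta\<^sup>*\<^sup>* t u \<Longrightarrow> hnf t \<Longrightarrow> hnf u"
  by (induct rule: rtranclp_induct) (auto intro: hnf_beta)

subsection \<open>Standardization\<close>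

abbreviation apps :: "lterm \<Rightarrow> lterm list \<Rightarrow> lterm" (infixl \<open>\<degree>\<degree>\<close> 150) where
  "t \<degree>\<degree> ts \<equiv> foldl LApp t ts"

lemma apps_snoc: "t \<degree>\<degree> (ts @ [u]) = LApp (t \<degree>\<degree> ts) u"
  by simp

lemma apps_eq_LLam_iff [iff]: "t \<degree>\<degree> ts = LLam r \<longleftrightarrow> t = LLam r \<and> ts = []"
  by (induct ts rule: rev_induct) auto

lemma lift_apps [simp]: "lift i (t \<degree>\<degree> ts) = lift i t \<degree>\<degree> map (lift i) ts"
  by (induct ts arbitrary: t) simp_all

lemma subst_apps [simp]: "lsubst (t \<degree>\<degree> ts) u i = lsubst t u i \<degree>\<degree> map (\<lambda>t. lsubst t u i) ts"
  by (induct ts arbitrary: t) simp_all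

lemma head_var_apps [simp]: "head_var (t \<degree>\<degree> ts) = head_var t"
  by (induct ts arbitrary: t) auto

lemma hnf_LLam_apps: "hnf (LLam r \<degree>\<degree> ss) \<longleftrightarrow> ss = [] \<and> hnf r"
  by (cases ss rule: rev_exhaust) auto

lemma hstep_apps: "hstep a b \<Longrightarrow> (\<forall>c. a \<noteq> LLam c) \<Longrightarrow> hstep (a \<degree>\<degree> ss) (b \<degree>\<degree> ss)"
  by (induct ss arbitrary: a b) (auto intro: hstep_app)

lemma beta_apps_cases:
  assumes "beta (r \<degree>\<degree> rs) s"
  shows "(\<exists>r'. beta r r' \<and> s = r' \<degree>\<degree> rs)
    \<or> (\<exists>rs'. (rs, rs') \<in> listrel1 {(a, b). beta a b} \<and> s = r \<degree>\<degree> rs')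
    \<or> (\<exists>t u us. r = LLam t \<and> rs = u # us \<and> s = lsubst t u 0 \<degree>\<degree> us)"
  using assms
proof (induct rs arbitrary: s rule: rev_induct)
  case (snoc x xs)
  from snoc(2) have "beta (LApp (r \<degree>\<degree> xs) x) s" by simp
  then show ?case
  proof (cases rule: beta.cases)
    case (appL a')
    from snoc(1)[OF appL(2)] appL(1) show ?thesis
      by (elim disjE exE) (auto intro!: append_listrel1I)
  next
    case (appR x')
    then have "(xs @ [x], xs @ [x']) \<in> listrel1 {(a, b). beta a b}"
      by (auto intro!: append_listrel1I)
    with appR show ?thesis by auto
  qed auto
qed auto

declare listrel_mono [mono_set]

text \<open>Standard reduction, in the inductive formulation of Loader.\<close>
inductive sred :: "lterm \<Rightarrow> lterm \<Rightarrow> bool" (infixl \<open>\<rightarrow>\<^sub>s\<close> 50)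
  and sreds :: "lterm list \<Rightarrow> lterm list \<Rightarrow> bool" (infixl \<open>[\<rightarrow>\<^sub>s]\<close> 50)
where
  "ss [\<rightarrow>\<^sub>s] ts \<equiv> listrelp (\<rightarrow>\<^sub>s) ss ts"
| sred_Var: "rs [\<rightarrow>\<^sub>s] rs' \<Longrightarrow> LVar x \<degree>\<degree> rs \<rightarrow>\<^sub>s LVar x \<degree>\<degree> rs'"
| sred_LLam: "r \<rightarrow>\<^sub>s r' \<Longrightarrow> ss [\<rightarrow>\<^sub>s] ss' \<Longrightarrow> LLam r \<degree>\<degree> ss \<rightarrow>\<^sub>s LLam r' \<degree>\<degree> ss'"
| sred_redex: "lsubst r s 0 \<degree>\<degree> ss \<rightarrow>\<^sub>s t \<Longrightarrow> LApp (LLam r) s \<degree>\<degree> ss \<rightarrow>\<^sub>s t"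

lemma listrelp_conj1: "listrelp (\<lambda>x y. R x y \<and> S x y) xs ys \<Longrightarrow> listrelp R xs ys"
  by (induct rule: listrelp.induct) (auto intro: listrelp.intros)

lemma listrelp_append: "listrelp R xs ys \<Longrightarrow> listrelp R xs' ys' \<Longrightarrow> listrelp R (xs @ xs') (ys @ ys')"
  by (induct rule: listrelp.induct) (auto intro: listrelp.intros)

lemma listrelp_map:
  "listrelp R xs ys \<Longrightarrow> (\<And>x y. R x y \<Longrightarrow> S (f x) (g y)) \<Longrightarrow> listrelp S (map f xs) (map g ys)"
  by (induct rule: listrelp.induct) (auto intro: listrelp.intros)

lemma sred_LApp: "r \<rightarrow>\<^sub>s r' \<Longrightarrow> s \<rightarrow>\<^sub>s s' \<Longrightarrow> LApp r s \<rightarrow>\<^sub>s LApp r' s'"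
proof (induct rule: sred.induct)
  case (sred_Var rs rs' x)
  have "rs @ [s] [\<rightarrow>\<^sub>s] rs' @ [s']"
    using listrelp_conj1[OF sred_Var(1)] \<open>s \<rightarrow>\<^sub>s s'\<close>
    by (intro listrelp_append listrelp.intros)
  then show ?case by (metis apps_snoc sred.sred_Var)
next
  case (sred_LLam r r' ss ss')
  have "ss @ [s] [\<rightarrow>\<^sub>s] ss' @ [s']"
    using listrelp_conj1[OF sred_LLam(3)] \<open>s \<rightarrow>\<^sub>s s'\<close>
    by (intro listrelp_append listrelp.intros)
  with \<open>r \<rightarrow>\<^sub>s r'\<close> show ?case by (metis apps_snoc sred.sred_LLam)
next
  case (sred_redex r u ss t)
  then show ?case by (metis apps_snoc sred.sred_redex)
qed

lemma sred_apps: "ts [\<rightarrow>\<^sub>s] ts' \<Longrightarrow> r \<rightarrow>\<^sub>s r' \<Longrightarrow> r \<degree>\<degree> ts \<rightarrow>\<^sub>s r' \<degree>\<degree> ts'"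
  by (induct arbitrary: r r' rule: listrelp.induct) (auto intro: sred_LApp)

lemma sred_refl: "t \<rightarrow>\<^sub>s t"
proof (induct t)
  case (LVar x)
  show ?case using sred_Var[OF listrelp.Nil, of x] by simp
next
  case (LLam t)
  show ?case using sred_LLam[OF LLam listrelp.Nil] by simp
qed (rule sred_LApp)

lemma sred_lift: "s \<rightarrow>\<^sub>s t \<Longrightarrow> lift i s \<rightarrow>\<^sub>s lift i t"
proof (induct arbitrary: i rule: sred.induct)
  case (sred_Var rs rs' x)
  then have "map (lift i) rs [\<rightarrow>\<^sub>s] map (lift i) rs'"
    by (auto elim: listrelp_map)
  then show ?case by (cases "x < i") (auto intro: sred.sred_Var)
next
  case (sred_LLam r r' ss ss')
  then have "map (lift i) ss [\<rightarrow>\<^sub>s] map (lift i) ss'"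
    by (auto elim: listrelp_map)
  with sred_LLam show ?case by (auto intro: sred.sred_LLam)
qed (auto intro: sred.sred_redex simp: lift_subst)

lemma sred_subst: "r \<rightarrow>\<^sub>s r' \<Longrightarrow> s \<rightarrow>\<^sub>s s' \<Longrightarrow> lsubst r s x \<rightarrow>\<^sub>s lsubst r' s' x"
proof (induct arbitrary: s s' x rule: sred.induct)
  case (sred_Var rs rs' y)
  then have "map (\<lambda>t. lsubst t s x) rs [\<rightarrow>\<^sub>s] map (\<lambda>t. lsubst t s' x) rs'"
    by (auto elim: listrelp_map)
  moreover have "lsubst (LVar y) s x \<rightarrow>\<^sub>s lsubst (LVar y) s' x"
    using \<open>s \<rightarrow>\<^sub>s s'\<close> by (simp add: sred_refl)
  ultimately show ?case by (simp add: sred_apps)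
next
  case (sred_LLam r r' ss ss')
  then have "map (\<lambda>t. lsubst t s x) ss [\<rightarrow>\<^sub>s] map (\<lambda>t. lsubst t s' x) ss'"
    by (auto elim: listrelp_map)
  moreover have "lsubst r (lift 0 s) (Suc x) \<rightarrow>\<^sub>s lsubst r' (lift 0 s') (Suc x)"
    using sred_LLam by (blast intro: sred_lift)
  ultimately show ?case by (auto intro: sred.sred_LLam)
next
  case (sred_redex r u ss t)
  then show ?case by (auto simp: subst_subst intro: sred.sred_redex)
qed

lemma sreds_beta_list:
  assumes "listrelp (\<lambda>t u. t \<rightarrow>\<^sub>s u \<and> (\<forall>v. beta u v \<longrightarrow> t \<rightarrow>\<^sub>s v)) rs rs'"
    and "(rs', ss) \<in> listrel1 {(a, b). beta a b}"
  shows "rs [\<rightarrow>\<^sub>s] ss"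
  using assms
proof (induct arbitrary: ss rule: listrelp.induct)
  case (Cons x y xs ys)
  from Cons.prems show ?case
  proof (rule Cons_listrel1E1)
    fix y' assume "ss = y' # ys" "(y, y') \<in> {(a, b). beta a b}"
    with Cons(1,2) show ?thesis by (auto intro: listrelp.Cons dest: listrelp_conj1)
  next
    fix ys' assume "ss = y # ys'" "(ys, ys') \<in> listrel1 {(a, b). beta a b}"
    with Cons show ?thesis by (auto intro: listrelp.Cons)
  qed
qed simp

lemma sred_beta: "r \<rightarrow>\<^sub>s r' \<Longrightarrow> beta r' r'' \<Longrightarrow> r \<rightarrow>\<^sub>s r''"
proof (induct arbitrary: r'' rule: sred.induct)
  case (sred_Var rs rs' x)
  from beta_apps_cases[OF sred_Var(2)] obtain ss
    where "(rs', ss) \<in> listrel1 {(a, b). beta a b}" "r'' = LVar x \<degree>\<degree> ss"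
    by (auto elim: beta.cases)
  with sred_Var(1) show ?case by (auto intro: sred.sred_Var sreds_beta_list)
next
  case (sred_LLam r r' ss ss')
  have ss: "ss [\<rightarrow>\<^sub>s] ss'" using sred_LLam(3) by (rule listrelp_conj1)
  from beta_apps_cases[OF sred_LLam(4)] show ?case
  proof (elim disjE exE conjE)
    fix s assume "beta (LLam r') s" "r'' = s \<degree>\<degree> ss'"
    then obtain r0 where "r'' = LLam r0 \<degree>\<degree> ss'" "beta r' r0" by (auto elim: beta.cases)
    with sred_LLam(2) ss show ?case by (auto intro: sred.sred_LLam)
  next
    fix ss'' assume "(ss', ss'') \<in> listrel1 {(a, b). beta a b}" "r'' = LLam r' \<degree>\<degree> ss''"
    with sred_LLam(1,3) show ?case by (auto intro: sred.sred_LLam sreds_beta_list)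
  next
    fix t u' us' assume "LLam r' = LLam t" "ss' = u' # us'" "r'' = lsubst t u' 0 \<degree>\<degree> us'"
    moreover from ss this(2) obtain u us where "ss = u # us" "u \<rightarrow>\<^sub>s u'" "us [\<rightarrow>\<^sub>s] us'"
      by (auto elim: listrelp.cases)
    ultimately show ?case
      using sred_LLam(1) by (auto intro!: sred.sred_redex sred_apps sred_subst)
  qed
qed (auto intro: sred.sred_redex)

lemma betas_imp_sred: "beta\<^sup>*\<^sup>* r r' \<Longrightarrow> r \<rightarrow>\<^sub>s r'"
  by (induct rule: rtranclp_induct) (auto intro: sred_refl sred_beta)

lemma sred_hnf_imp_hsteps_hnf: "r \<rightarrow>\<^sub>s r' \<Longrightarrow> hnf r' \<Longrightarrow> \<exists>u. hstep\<^sup>*\<^sup>* r u \<and> hnf u"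
proof (induct rule: sred.induct)
  case (sred_Var rs rs' x)
  show ?case by (intro exI[of _ "LVar x \<degree>\<degree> rs"]) (simp add: hnf_if_head_var)
next
  case (sred_LLam r r' ss ss')
  then have "ss = []" by (auto simp: hnf_LLam_apps elim: listrelp.cases)
  with sred_LLam show ?case by (auto simp: hnf_LLam_apps intro: hsteps_LLam)
next
  case (sred_redex r s ss t)
  moreover have "hstep (LApp (LLam r) s \<degree>\<degree> ss) (lsubst r s 0 \<degree>\<degree> ss)"
    by (auto intro: hstep_apps hstep_redex)
  ultimately show ?case by (meson converse_rtranclp_into_rtranclp)
qed

lemma solvable_imp_hsteps_hnf: "solvable t \<Longrightarrow> \<exists>v. hstep\<^sup>*\<^sup>* t v \<and> hnf v"
proof -
  assume "solvable t"
  then obtain u where "equivclp beta t u" "hnf u" unfolding solvable_def by blast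
  then obtain d where "beta\<^sup>*\<^sup>* t d" "hnf d"
    using beta_Church_Rosser hnf_betas by blast
  then show ?thesis using betas_imp_sred sred_hnf_imp_hsteps_hnf by blast
qed

definition hnf_in :: "nat \<Rightarrow> lterm \<Rightarrow> bool" where
  "hnf_in n t \<longleftrightarrow> (\<exists>u. (hstep ^^ n) t u \<and> hnf u)"

text \<open>The relation between the CPS images of the two sides of an evaluation step: \<open>u\<close> is no
farther from a head normal form than \<open>t\<close>, and strictly closer unless \<open>d\<close>.\<close>
definition hjoin :: "lterm \<Rightarrow> lterm \<Rightarrow> bool \<Rightarrow> bool" where
  "hjoin t u d \<longleftrightarrow> (\<exists>X a b. (hstep ^^ a) t X \<and> (hstep ^^ b) u X \<and> (b < a \<or> b = a \<and> d))"

lemma solvable_iff_hnf_in: "solvable t \<longleftrightarrow> (\<exists>n. hnf_in n t)"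
proof
  assume "solvable t"
  then show "\<exists>n. hnf_in n t"
    unfolding hnf_in_def by (meson solvable_imp_hsteps_hnf rtranclp_imp_relpowp)
next
  assume "\<exists>n. hnf_in n t"
  then obtain n u where "(hstep ^^ n) t u" "hnf u" unfolding hnf_in_def by blast
  then show "solvable t" unfolding solvable_def
    by (blast intro: rtranclp_into_equivclp hsteps_imp_betas relpowp_imp_rtranclp)
qed

lemma relpowp_hstep_deterministic:
  "(hstep ^^ n) t u \<Longrightarrow> (hstep ^^ m) t v \<Longrightarrow> n \<le> m \<Longrightarrow> (hstep ^^ (m - n)) u v"
proof (induct n arbitrary: t m)
  case (Suc n)
  from Suc(2) obtain t1 where t1: "hstep t t1" "(hstep ^^ n) t1 u" by (metis relpowp_Suc_D2)
  from Suc(4) obtain m' where m: "m = Suc m'" by (cases m) auto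
  with Suc(3) obtain t2 where t2: "hstep t t2" "(hstep ^^ m') t2 v" by (metis relpowp_Suc_D2)
  from t1(1) t2(1) have "t1 = t2" by (rule hstep_deterministic)
  with Suc(1)[OF t1(2)] t2(2) m Suc(4) show ?case by simp
qed simp

lemma relpowp_hstep_from_hnf: "hnf u \<Longrightarrow> (hstep ^^ k) u v \<Longrightarrow> k = 0"
proof (cases k)
  case (Suc k')
  assume "hnf u" "(hstep ^^ k) u v"
  with Suc obtain y where "hstep u y" by (metis relpowp_Suc_D2)
  with \<open>hnf u\<close> show ?thesis by (blast dest: hnf_imp_no_hstep)
qed

lemma hjoin_hnf_in: "hjoin t u d \<Longrightarrow> hnf_in n t \<Longrightarrow> \<exists>m. hnf_in m u \<and> (m < n \<or> m = n \<and> d)"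
proof -
  assume "hjoin t u d" "hnf_in n t"
  then obtain X a b w where X: "(hstep ^^ a) t X" "(hstep ^^ b) u X" "b < a \<or> b = a \<and> d"
    and w: "(hstep ^^ n) t w" "hnf w"
    unfolding hjoin_def hnf_in_def by blast
  have "a \<le> n"
  proof (rule ccontr)
    assume "\<not> a \<le> n"
    then have "(hstep ^^ (a - n)) w X" using relpowp_hstep_deterministic[OF w(1) X(1)] by simp
    with \<open>\<not> a \<le> n\<close> show False using relpowp_hstep_from_hnf[OF w(2)] by fastforce
  qed
  then have "(hstep ^^ (n - a)) X w" using X(1) w(1) by (blast intro: relpowp_hstep_deterministic)
  with X(2) have "(hstep ^^ (b + (n - a))) u w" by (simp add: relpowp_add relcomppI)
  with w(2) have "hnf_in (b + (n - a)) u" unfolding hnf_in_def by blast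
  with X(3) \<open>a \<le> n\<close> show ?thesis by (intro exI[of _ "b + (n - a)"]) auto
qed

lemma hjoin_imp_equivclp: "hjoin t u d \<Longrightarrow> equivclp beta t u"
proof -
  assume "hjoin t u d"
  then obtain X a b where "(hstep ^^ a) t X" "(hstep ^^ b) u X" unfolding hjoin_def by blast
  then have "beta\<^sup>*\<^sup>* t X" "beta\<^sup>*\<^sup>* u X"
    by (blast intro: hsteps_imp_betas relpowp_imp_rtranclp)+
  then show ?thesis
    by (meson equivclp_sym equivclp_trans rtranclp_into_equivclp)
qed

lemma hjoin_mono: "hjoin t u d \<Longrightarrow> (d \<Longrightarrow> d') \<Longrightarrow> hjoin t u d'"
  unfolding hjoin_def by blast

lemma hjoin_refl: "hjoin t t True"
  unfolding hjoin_def by (intro exI[of _ t] exI[of _ 0]) simp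

lemma relpowp_hstep_LLam: "(hstep ^^ a) t X \<Longrightarrow> (hstep ^^ a) (LLam t) (LLam X)"
proof (induct a arbitrary: t)
  case (Suc a)
  then obtain t1 where "hstep t t1" "(hstep ^^ a) t1 X" by (metis relpowp_Suc_D2)
  with Suc(1) show ?case by (metis hstep_LLam relpowp_Suc_I2)
qed simp

lemma hjoin_LLam: "hjoin t u d \<Longrightarrow> hjoin (LLam t) (LLam u) d"
  unfolding hjoin_def using relpowp_hstep_LLam by blast

lemma hjoin_hstep_both: "hstep t t' \<Longrightarrow> hstep u u' \<Longrightarrow> hjoin t' u' d \<Longrightarrow> hjoin t u d"
  unfolding hjoin_def by (blast intro: relpowp_Suc_I2)

lemma hjoin_hstep_left: "hstep t t' \<Longrightarrow> hjoin t' u d \<Longrightarrow> hjoin t u d'"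
  unfolding hjoin_def by (blast intro: relpowp_Suc_I2 less_SucI)

lemma hjoin_hstep_right: "hjoin t u d \<Longrightarrow> hstep u u' \<Longrightarrow> hjoin t u' d'"
proof -
  assume "hjoin t u d" "hstep u u'"
  then obtain X a b where X: "(hstep ^^ a) t X" "(hstep ^^ b) u X" "b < a \<or> b = a \<and> d"
    unfolding hjoin_def by blast
  show ?thesis
  proof (cases b)
    case 0
    with X \<open>hstep u u'\<close> have "(hstep ^^ Suc a) t u'" by (auto intro: relpowp_Suc_I)
    then show ?thesis unfolding hjoin_def by (intro exI[of _ u'] exI[of _ "Suc a"] exI[of _ 0]) auto
  next
    case (Suc b')
    with X \<open>hstep u u'\<close> have "(hstep ^^ b') u' X" by (metis relpowp_Suc_D2 hstep_deterministic)
    with X Suc show ?thesis unfolding hjoin_def by (intro exI[of _ X] exI[of _ a] exI[of _ b']) auto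
  qed
qed

text \<open>\<open>ecps \<sigma> \<kappa> M K\<close> is \<open>\<langle>M\<rangle>[K]\<close> with the free ordinary and continuation variables of \<open>M\<close>
interpreted by the target terms \<open>\<sigma>\<close> and \<open>\<kappa>\<close> instead of target variables; allowing arbitrary
terms makes the translation commute with target substitution.\<close>
abbreviation lift_env :: "nat \<Rightarrow> (nat \<Rightarrow> lterm) \<Rightarrow> nat \<Rightarrow> lterm" where
  "lift_env j \<sigma> \<equiv> (\<lambda>n. lift j (\<sigma> n))"

definition env_under :: "(nat \<Rightarrow> lterm) \<Rightarrow> nat \<Rightarrow> lterm" where
  "env_under \<sigma> n = (case n of 0 \<Rightarrow> LVar 0 | Suc m \<Rightarrow> lift 0 (\<sigma> m))"

fun ecps :: "(nat \<Rightarrow> lterm) \<Rightarrow> (nat \<Rightarrow> lterm) \<Rightarrow> trm \<Rightarrow> lterm \<Rightarrow> lterm"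
and ecpsj :: "(nat \<Rightarrow> lterm) \<Rightarrow> (nat \<Rightarrow> lterm) \<Rightarrow> jmp \<Rightarrow> lterm"
and evstar :: "(nat \<Rightarrow> lterm) \<Rightarrow> (nat \<Rightarrow> lterm) \<Rightarrow> trm \<Rightarrow> lterm" where
  "evstar \<sigma> \<kappa> (Var n) = \<sigma> n"
| "evstar \<sigma> \<kappa> (Lam M) =
     LLam (LLam (ecps (lift_env 0 (env_under \<sigma>)) (lift_env 0 (lift_env 0 \<kappa>)) M (LVar 0)))"
| "evstar \<sigma> \<kappa> (App s t) = LVar 0"
| "evstar \<sigma> \<kappa> (Where s t) = LVar 0"
| "evstar \<sigma> \<kappa> (Mu J) = LVar 0"
| "ecps \<sigma> \<kappa> (Var n) K = LApp K (evstar \<sigma> \<kappa> (Var n))"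
| "ecps \<sigma> \<kappa> (Lam M) K = LApp K (evstar \<sigma> \<kappa> (Lam M))"
| "ecps \<sigma> \<kappa> (App s t) K =
     (if is_val s \<and> is_val t then LApp (LApp (evstar \<sigma> \<kappa> s) (evstar \<sigma> \<kappa> t)) K
      else if is_val s then
        ecps \<sigma> \<kappa> t (LLam (LApp (LApp (evstar (lift_env 0 \<sigma>) (lift_env 0 \<kappa>) s) (LVar 0)) (lift 0 K)))
      else if is_val t then
        ecps \<sigma> \<kappa> s (LLam (LApp (LApp (LVar 0) (evstar (lift_env 0 \<sigma>) (lift_env 0 \<kappa>) t)) (lift 0 K)))
      else
        ecps \<sigma> \<kappa> s (LLam (ecps (lift_env 0 \<sigma>) (lift_env 0 \<kappa>) t
           (LLam (LApp (LApp (LVar 1) (LVar 0)) (lift 0 (lift 0 K)))))))"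
| "ecps \<sigma> \<kappa> (Where L M) K =
     ecps \<sigma> \<kappa> M (LLam (ecps (env_under \<sigma>) (lift_env 0 \<kappa>) L (lift 0 K)))"
| "ecps \<sigma> \<kappa> (Mu J) K = LApp (LLam (ecpsj (lift_env 0 \<sigma>) (env_under \<kappa>) J)) K"
| "ecpsj \<sigma> \<kappa> (Jump k M) = ecps \<sigma> \<kappa> M (\<kappa> k)"

lemma env_under_0 [simp]: "env_under \<sigma> 0 = LVar 0"
  by (simp add: env_under_def)

lemma env_under_Suc [simp]: "env_under \<sigma> (Suc m) = lift 0 (\<sigma> m)"
  by (simp add: env_under_def)

lemma env_under_upd [simp]: "env_under (\<kappa>(k := c)) = (env_under \<kappa>)(Suc k := lift 0 c)"
  by (simp add: fun_eq_iff env_under_def split: nat.split)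

lemma env_under_LVar [simp]: "env_under (\<lambda>n. LVar (f n)) = (\<lambda>n. LVar (ext f n))"
  by (rule ext) (simp add: env_under_def ext_def split: nat.split)

lemma cps_eq_ecps:
  "cps ro rk M K = ecps (\<lambda>n. LVar (ro n)) (\<lambda>n. LVar (rk n)) M K"
  "cpsj ro rk J = ecpsj (\<lambda>n. LVar (ro n)) (\<lambda>n. LVar (rk n)) J"
  "vstar ro rk M = evstar (\<lambda>n. LVar (ro n)) (\<lambda>n. LVar (rk n)) M"
  by (induct ro rk M K and ro rk J and ro rk M rule: cps_cpsj_vstar.induct)
     (simp_all add: o_def)

lemma is_val_omap [simp]: "is_val (omap f M) = is_val M"
  and is_val_kmap [simp]: "is_val (kmap f M) = is_val M"
  and is_val_cs [simp]: "is_val (cs N k M) = is_val M"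
  and is_val_osub [simp]: "\<forall>n. is_val (\<tau> n) \<Longrightarrow> is_val (osub \<tau> M) = is_val M"
  by (cases M; auto)+

lemma ecps_cong: "\<sigma> = \<sigma>' \<Longrightarrow> \<kappa> = \<kappa>' \<Longrightarrow> K = K' \<Longrightarrow> ecps \<sigma> \<kappa> M K = ecps \<sigma>' \<kappa>' M K'"
  and ecpsj_cong: "\<sigma> = \<sigma>' \<Longrightarrow> \<kappa> = \<kappa>' \<Longrightarrow> ecpsj \<sigma> \<kappa> J = ecpsj \<sigma>' \<kappa>' J"
  and evstar_cong: "\<sigma> = \<sigma>' \<Longrightarrow> \<kappa> = \<kappa>' \<Longrightarrow> evstar \<sigma> \<kappa> M = evstar \<sigma>' \<kappa>' M"
  by simp_all

lemma lift_ecps: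
  "lift j (ecps \<sigma> \<kappa> M K) = ecps (lift_env j \<sigma>) (lift_env j \<kappa>) M (lift j K)"
  "lift j (ecpsj \<sigma> \<kappa> J) = ecpsj (lift_env j \<sigma>) (lift_env j \<kappa>) J"
  "is_val M \<Longrightarrow> lift j (evstar \<sigma> \<kappa> M) = evstar (lift_env j \<sigma>) (lift_env j \<kappa>) M"
  by (induct \<sigma> \<kappa> M K and \<sigma> \<kappa> J and \<sigma> \<kappa> M arbitrary: j and j and j
      rule: ecps_ecpsj_evstar.induct)
    (auto intro!: ecps_cong ecpsj_cong evstar_cong simp: fun_eq_iff env_under_def split: nat.split)

lemma subst_ecps:
  "lsubst (ecps \<sigma> \<kappa> M K) s j = ecps (\<lambda>n. lsubst (\<sigma> n) s j) (\<lambda>n. lsubst (\<kappa> n) s j) M (lsubst K s j)"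
  "lsubst (ecpsj \<sigma> \<kappa> J) s j = ecpsj (\<lambda>n. lsubst (\<sigma> n) s j) (\<lambda>n. lsubst (\<kappa> n) s j) J"
  "is_val M \<Longrightarrow> lsubst (evstar \<sigma> \<kappa> M) s j = evstar (\<lambda>n. lsubst (\<sigma> n) s j) (\<lambda>n. lsubst (\<kappa> n) s j) M"
  by (induct \<sigma> \<kappa> M K and \<sigma> \<kappa> J and \<sigma> \<kappa> M arbitrary: s j and s j and s j
      rule: ecps_ecpsj_evstar.induct)
    (auto intro!: ecps_cong ecpsj_cong evstar_cong simp: fun_eq_iff env_under_def split: nat.split)

lemma evstar_lift: "is_val M \<Longrightarrow> evstar (lift_env j \<sigma>) (lift_env j \<kappa>) M = lift j (evstar \<sigma> \<kappa> M)"
  by (simp add: lift_ecps)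

lemma ecps_evstar_omap:
  "ecps \<sigma> \<kappa> (omap f M) K = ecps (\<lambda>n. \<sigma> (f n)) \<kappa> M K
    \<and> evstar \<sigma> \<kappa> (omap f M) = evstar (\<lambda>n. \<sigma> (f n)) \<kappa> M"
  "ecpsj \<sigma> \<kappa> (omapj f J) = ecpsj (\<lambda>n. \<sigma> (f n)) \<kappa> J"
  by (induct M and J arbitrary: \<sigma> \<kappa> K f and \<sigma> \<kappa> f)
    (auto intro!: ecps_cong ecpsj_cong evstar_cong simp: fun_eq_iff ext_def split: nat.split)

lemma ecps_evstar_kmap:
  "ecps \<sigma> \<kappa> (kmap f M) K = ecps \<sigma> (\<lambda>n. \<kappa> (f n)) M K
    \<and> evstar \<sigma> \<kappa> (kmap f M) = evstar \<sigma> (\<lambda>n. \<kappa> (f n)) M"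
  "ecpsj \<sigma> \<kappa> (kmapj f J) = ecpsj \<sigma> (\<lambda>n. \<kappa> (f n)) J"
  by (induct M and J arbitrary: \<sigma> \<kappa> K f and \<sigma> \<kappa> f)
    (auto intro!: ecps_cong ecpsj_cong evstar_cong simp: fun_eq_iff ext_def split: nat.split)

lemmas ecps_omap [simp] = ecps_evstar_omap(1)[THEN conjunct1]
  and evstar_omap [simp] = ecps_evstar_omap(1)[THEN conjunct2]
  and ecpsj_omap [simp] = ecps_evstar_omap(2)
  and ecps_kmap [simp] = ecps_evstar_kmap(1)[THEN conjunct1]
  and evstar_kmap [simp] = ecps_evstar_kmap(1)[THEN conjunct2]
  and ecpsj_kmap [simp] = ecps_evstar_kmap(2)

lemma ecps_val [simp]: "is_val V \<Longrightarrow> ecps \<sigma> \<kappa> V K = LApp K (evstar \<sigma> \<kappa> V)"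
  by (cases V) auto

lemma ecps_evstar_osub:
  "\<forall>n. is_val (\<tau> n) \<Longrightarrow> ecps \<sigma> \<kappa> (osub \<tau> M) K = ecps (\<lambda>n. evstar \<sigma> \<kappa> (\<tau> n)) \<kappa> M K
      \<and> evstar \<sigma> \<kappa> (osub \<tau> M) = evstar (\<lambda>n. evstar \<sigma> \<kappa> (\<tau> n)) \<kappa> M"
  "\<forall>n. is_val (\<tau> n) \<Longrightarrow> ecpsj \<sigma> \<kappa> (osubj \<tau> J) = ecpsj (\<lambda>n. evstar \<sigma> \<kappa> (\<tau> n)) \<kappa> J"
  by (induct M and J arbitrary: \<sigma> \<kappa> K \<tau> and \<sigma> \<kappa> \<tau>)
    (auto intro!: ecps_cong ecpsj_cong evstar_cong
      simp: fun_eq_iff exts_def evstar_lift split: nat.split)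

text \<open>The context substitution \<open>J{[k]\<box> \<mapsto> [k](N where x:=\<box>)}\<close> acts on the image of \<open>J\<close> by
replacing the continuation for \<open>k\<close> with \<open>\<lambda>x.\<langle>N\<rangle>[k]\<close>.\<close>
definition cs_cont :: "(nat \<Rightarrow> lterm) \<Rightarrow> (nat \<Rightarrow> lterm) \<Rightarrow> trm \<Rightarrow> nat \<Rightarrow> lterm" where
  "cs_cont \<sigma> \<kappa> N k = LLam (ecps (env_under \<sigma>) (lift_env 0 \<kappa>) N (lift 0 (\<kappa> k)))"

lemma lift_cs_cont [simp]: "lift 0 (cs_cont \<sigma> \<kappa> N k) = cs_cont (lift_env 0 \<sigma>) (lift_env 0 \<kappa>) N k"
  unfolding cs_cont_def
  by (auto simp: lift_ecps intro!: ecps_cong simp: fun_eq_iff env_under_def split: nat.split)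

lemma cs_cont_where [simp]:
  "cs_cont (env_under \<sigma>) (lift_env 0 \<kappa>) (omap (ext Suc) N) k
   = cs_cont (lift_env 0 \<sigma>) (lift_env 0 \<kappa>) N k"
  unfolding cs_cont_def by (auto intro!: ecps_cong simp: fun_eq_iff ext_def split: nat.split)

lemma cs_cont_lam [simp]:
  "cs_cont (lift_env 0 (env_under \<sigma>)) (lift_env 0 (lift_env 0 \<kappa>)) (omap (ext Suc) N) k
   = cs_cont (lift_env 0 (lift_env 0 \<sigma>)) (lift_env 0 (lift_env 0 \<kappa>)) N k"
  unfolding cs_cont_def by (auto intro!: ecps_cong simp: fun_eq_iff ext_def split: nat.split)

lemma cs_cont_mu [simp]:
  "cs_cont (lift_env 0 \<sigma>) (env_under \<kappa>) (kmap Suc N) (Suc k)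
   = cs_cont (lift_env 0 \<sigma>) (lift_env 0 \<kappa>) N k"
  unfolding cs_cont_def by (auto intro!: ecps_cong simp: fun_eq_iff split: nat.split)

lemma ecps_evstar_cs:
  "ecps \<sigma> \<kappa> (cs N k Q) K = ecps \<sigma> (\<kappa>(k := cs_cont \<sigma> \<kappa> N k)) Q K
      \<and> evstar \<sigma> \<kappa> (cs N k Q) = evstar \<sigma> (\<kappa>(k := cs_cont \<sigma> \<kappa> N k)) Q"
  "ecpsj \<sigma> \<kappa> (csj N k J) = ecpsj \<sigma> (\<kappa>(k := cs_cont \<sigma> \<kappa> N k)) J"
  by (induct Q and J arbitrary: \<sigma> \<kappa> K N k and \<sigma> \<kappa> N k)
    (auto intro!: ecps_cong ecpsj_cong evstar_cong
      simp: fun_eq_iff cs_cont_def[symmetric] split: nat.split)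

subsection \<open>Simulation of evaluation steps by head reduction\<close>

fun admin_size :: "trm \<Rightarrow> nat" where
  "admin_size (App L M) = (if is_val L then 2 + admin_size M else 2 + admin_size L)"
| "admin_size (Where L M) = 1 + admin_size M"
| "admin_size _ = 0"

lemma E0_not_val: "E0 P P' \<Longrightarrow> \<not> is_val P"
  by (induct rule: E0.induct) auto

lemma ecps_mu_app:
  "ecps \<sigma> \<kappa> (App (Mu J) M) K = ecps \<sigma> \<kappa> (Where (App (Var 0) (omap Suc M)) (Mu J)) K"
  by (cases "is_val M")
    (auto intro!: ecps_cong ecpsj_cong evstar_cong simp: fun_eq_iff split: nat.split)

lemma ecps_app_mu:
  "is_val V \<Longrightarrow> ecps \<sigma> \<kappa> (App V (Mu J)) K = ecps \<sigma> \<kappa> (Where (App (omap Suc V) (Var 0)) (Mu J)) K"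
  by (auto intro!: ecps_cong ecpsj_cong evstar_cong simp: fun_eq_iff split: nat.split)

lemma ecps_beta_v_hjoin:
  assumes "is_val V"
  shows "hjoin (ecps \<sigma> \<kappa> (App (Lam M) V) K) (ecps \<sigma> \<kappa> (Where M V) K) d"
proof -
  let ?v = "evstar \<sigma> \<kappa> V"
  define B where "B = ecps (lift_env 0 (env_under \<sigma>)) (lift_env 0 (lift_env 0 \<kappa>)) M (LVar 0)"
  define C where "C = ecps (env_under \<sigma>) (lift_env 0 \<kappa>) M (lift 0 K)"
  have "lsubst (lsubst B (lift 0 ?v) (Suc 0)) K 0 = lsubst C ?v 0"
    unfolding B_def C_def
    by (auto simp: subst_ecps intro!: ecps_cong simp: fun_eq_iff split: nat.split)
  then have "hstep (LApp (LLam (lsubst B (lift 0 ?v) (Suc 0))) K) (lsubst C ?v 0)"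
    by (metis hstep_redex)
  moreover have "hstep (ecps \<sigma> \<kappa> (App (Lam M) V) K) (LApp (LLam (lsubst B (lift 0 ?v) (Suc 0))) K)"
    using assms hstep_app[OF hstep_redex, of "LLam B" ?v K] by (simp add: B_def)
  moreover have "hstep (ecps \<sigma> \<kappa> (Where M V) K) (lsubst C ?v 0)"
    using assms by (simp add: C_def hstep_redex)
  ultimately show ?thesis by (meson hjoin_hstep_left hjoin_hstep_both hjoin_refl)
qed

lemma ecps_where_v_hjoin:
  assumes "is_val V"
  shows "hjoin (ecps \<sigma> \<kappa> (Where M V) K) (ecps \<sigma> \<kappa> (subst0 M V) K) d"
proof -
  define C where "C = ecps (env_under \<sigma>) (lift_env 0 \<kappa>) M (lift 0 K)"
  have "\<forall>n. is_val (case n of 0 \<Rightarrow> V | Suc m \<Rightarrow> Var m)"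
    using assms by (auto split: nat.split)
  then have "lsubst C (evstar \<sigma> \<kappa> V) 0 = ecps \<sigma> \<kappa> (subst0 M V) K"
    unfolding C_def subst0_def
    by (auto simp: subst_ecps ecps_evstar_osub intro!: ecps_cong
        simp: fun_eq_iff split: nat.split)
  moreover have "hstep (ecps \<sigma> \<kappa> (Where M V) K) (lsubst C (evstar \<sigma> \<kappa> V) 0)"
    using assms by (simp add: C_def hstep_redex)
  ultimately show ?thesis by (metis hjoin_hstep_left hjoin_refl)
qed

lemma ecps_where_mu_hjoin:
  "hjoin (ecps \<sigma> \<kappa> (Where M (Mu J)) K) (ecps \<sigma> \<kappa> (Mu (csj (kmap Suc M) 0 J)) K) True"
proof -
  define K1 where "K1 = LLam (ecps (env_under \<sigma>) (lift_env 0 \<kappa>) M (lift 0 K))"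
  have "lsubst (ecpsj (lift_env 0 \<sigma>) (env_under \<kappa>) J) K1 0
     = lsubst (ecpsj (lift_env 0 \<sigma>) (env_under \<kappa>) (csj (kmap Suc M) 0 J)) K 0"
    unfolding K1_def
    by (auto simp: subst_ecps ecps_evstar_cs(2) cs_cont_def intro!: ecpsj_cong ecps_cong
        simp: fun_eq_iff env_under_def split: nat.split)
  then show ?thesis
    by (simp add: K1_def hjoin_hstep_both[OF hstep_redex hstep_redex] hjoin_refl)
qed

lemma ecps_App_arg_hjoin:
  assumes "is_val V" "\<not> is_val L" "\<And>K. hjoin (ecps \<sigma> \<kappa> L K) (ecps \<sigma> \<kappa> L' K) d"
  shows "hjoin (ecps \<sigma> \<kappa> (App V L) K) (ecps \<sigma> \<kappa> (App V L') K) d"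
proof -
  define K' where
    "K' = LLam (LApp (LApp (evstar (lift_env 0 \<sigma>) (lift_env 0 \<kappa>) V) (LVar 0)) (lift 0 K))"
  have IH: "hjoin (ecps \<sigma> \<kappa> (App V L) K) (ecps \<sigma> \<kappa> L' K') d"
    using assms by (simp add: K'_def)
  show ?thesis
  proof (cases "is_val L'")
    case True
    with assms(1) have "hstep (ecps \<sigma> \<kappa> L' K') (ecps \<sigma> \<kappa> (App V L') K)"
      by (auto simp: K'_def evstar_lift intro!: hstep_redex_eq)
    with IH show ?thesis by (rule hjoin_hstep_right)
  next
    case False
    with IH assms(1) show ?thesis by (simp add: K'_def)
  qed
qed

lemma ecps_App_fun_hjoin:
  assumes "\<not> is_val L" "\<And>K. hjoin (ecps \<sigma> \<kappa> L K) (ecps \<sigma> \<kappa> L' K) d"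
  shows "hjoin (ecps \<sigma> \<kappa> (App L M) K) (ecps \<sigma> \<kappa> (App L' M) K) (d \<and> \<not> is_val L')"
proof -
  define K' where "K' = (if is_val M
     then LLam (LApp (LApp (LVar 0) (evstar (lift_env 0 \<sigma>) (lift_env 0 \<kappa>) M)) (lift 0 K))
     else LLam (ecps (lift_env 0 \<sigma>) (lift_env 0 \<kappa>) M
       (LLam (LApp (LApp (LVar 1) (LVar 0)) (lift 0 (lift 0 K))))))"
  have IH: "hjoin (ecps \<sigma> \<kappa> (App L M) K) (ecps \<sigma> \<kappa> L' K') d"
    using assms by (simp add: K'_def)
  show ?thesis
  proof (cases "is_val L'")
    case True
    then have "hstep (ecps \<sigma> \<kappa> L' K') (ecps \<sigma> \<kappa> (App L' M) K)"
      by (auto simp: K'_def evstar_lift subst_ecps intro!: hstep_redex_eq)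
    with IH show ?thesis by (rule hjoin_hstep_right)
  next
    case False
    with IH show ?thesis by (cases "is_val M") (simp_all add: K'_def)
  qed
qed

lemma ecps_E0_hjoin:
  "E0 P P' \<Longrightarrow> hjoin (ecps \<sigma> \<kappa> P K) (ecps \<sigma> \<kappa> P' K) (admin_size P' < admin_size P)"
proof (induct arbitrary: \<sigma> \<kappa> K rule: E0.induct)
  case (mu_app J M)
  then show ?case by (simp add: ecps_mu_app hjoin_refl)
next
  case (app_mu V J)
  then show ?case by (simp add: ecps_app_mu hjoin_refl)
next
  case (beta_v V M)
  then show ?case by (rule ecps_beta_v_hjoin)
next
  case (where_v V M)
  then show ?case by (rule ecps_where_v_hjoin)
next
  case (where_mu M J)
  show ?case by (rule hjoin_mono[OF ecps_where_mu_hjoin]) simp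
next
  case (ctx_argR V L L')
  then show ?case by (intro hjoin_mono[OF ecps_App_arg_hjoin] E0_not_val) simp_all
next
  case (ctx_funL L L' M)
  then show ?case by (intro hjoin_mono[OF ecps_App_fun_hjoin] E0_not_val) (auto dest: E0_not_val)
next
  case (ctx_where L L' M)
  then show ?case by simp
qed

fun is_mu :: "trm \<Rightarrow> bool" where
  "is_mu (Mu _) = True"
| "is_mu _ = False"

text \<open>Evaluation steps whose CPS images are equally far from head normal form decrease this
measure; a step producing a top-level \<open>\<mu>\<close>-abstraction decreases its first component.\<close>
fun admin_rank :: "trm \<Rightarrow> nat \<times> nat" where
  "admin_rank (Mu (Jump l L)) = (0, admin_size L)"
| "admin_rank M = (1, admin_size M)"

definition cps_top :: "(nat \<Rightarrow> lterm) \<Rightarrow> (nat \<Rightarrow> lterm) \<Rightarrow> trm \<Rightarrow> lterm" where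
  "cps_top \<sigma> \<kappa> M = LLam (ecps \<sigma> \<kappa> M (LVar 0))"

lemma CPS_eq_cps_top: "CPS M = cps_top (\<lambda>n. LVar (Suc (2 * n))) (\<lambda>n. LVar (Suc (2 * n + 1))) M"
  unfolding CPS_def cps_top_def by (simp add: cps_eq_ecps)

lemma E0_not_mu: "E0 P P' \<Longrightarrow> \<not> is_mu P"
  by (induct rule: E0.induct) auto

lemma cps_top_Mu_hstep:
  "hstep (cps_top \<sigma> \<kappa> (Mu (Jump l L)))
     (LLam (ecps \<sigma> (\<lambda>n. lsubst (env_under \<kappa> n) (LVar 0) 0) L (lsubst (env_under \<kappa> l) (LVar 0) 0)))"
proof -
  have "hstep (cps_top \<sigma> \<kappa> (Mu (Jump l L)))
     (LLam (lsubst (ecps (lift_env 0 \<sigma>) (env_under \<kappa>) L (env_under \<kappa> l)) (LVar 0) 0))"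
    unfolding cps_top_def by (auto intro!: hstep_LLam hstep_redex)
  then show ?thesis by (simp add: subst_ecps)
qed

lemma Estep_hjoin:
  "Estep M N \<Longrightarrow> hjoin (cps_top \<sigma> \<kappa> M) (cps_top \<sigma> \<kappa> N) (admin_rank N < admin_rank M)"
proof (induct rule: Estep.induct)
  case (rename l J)
  define \<kappa>1 where "\<kappa>1 = (\<lambda>n. lsubst (env_under \<kappa> n) (LVar 0) 0)"
  have "hstep (cps_top \<sigma> \<kappa> (Mu (Jump l (Mu J)))) (LLam (ecps \<sigma> \<kappa>1 (Mu J) (\<kappa>1 l)))"
    using cps_top_Mu_hstep[of \<sigma> \<kappa> l "Mu J"] by (simp add: \<kappa>1_def)
  moreover have "hstep (LLam (ecps \<sigma> \<kappa>1 (Mu J) (\<kappa>1 l)))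
     (LLam (lsubst (ecpsj (lift_env 0 \<sigma>) (env_under \<kappa>1) J) (\<kappa>1 l) 0))"
    by (auto intro!: hstep_LLam hstep_redex)
  moreover have "hstep (cps_top \<sigma> \<kappa> (Mu (kren0 l J)))
     (LLam (lsubst (ecpsj (lift_env 0 \<sigma>) (env_under \<kappa>) (kren0 l J)) (LVar 0) 0))"
    unfolding cps_top_def by (auto intro!: hstep_LLam hstep_redex)
  moreover have "lsubst (ecpsj (lift_env 0 \<sigma>) (env_under \<kappa>1) J) (\<kappa>1 l) 0
     = lsubst (ecpsj (lift_env 0 \<sigma>) (env_under \<kappa>) (kren0 l J)) (LVar 0) 0"
    unfolding kren0_def \<kappa>1_def
    by (auto simp: subst_ecps intro!: ecpsj_cong simp: fun_eq_iff split: nat.split)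
  ultimately show ?case by (metis hjoin_hstep_left hjoin_hstep_both hjoin_refl)
next
  case (top L M)
  then have "hjoin (cps_top \<sigma> \<kappa> L) (cps_top \<sigma> \<kappa> M) (admin_size M < admin_size L)"
    unfolding cps_top_def by (intro hjoin_LLam ecps_E0_hjoin)
  moreover have "admin_rank L = (1, admin_size L)"
    using E0_not_mu[OF top] by (cases L rule: admin_rank.cases) auto
  then have "admin_size M < admin_size L \<Longrightarrow> admin_rank M < admin_rank L"
    by (cases M rule: admin_rank.cases) auto
  ultimately show ?case by (blast intro: hjoin_mono)
next
  case (under_mu L M l)
  then have "hjoin (cps_top \<sigma> \<kappa> (Mu (Jump l L))) (cps_top \<sigma> \<kappa> (Mu (Jump l M)))
      (admin_size M < admin_size L)"
    by (intro hjoin_hstep_both[OF cps_top_Mu_hstep cps_top_Mu_hstep] hjoin_LLam ecps_E0_hjoin)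
  then show ?case by simp
qed

lemma Esteps_equivclp: "Estep\<^sup>*\<^sup>* M N \<Longrightarrow> equivclp beta (cps_top \<sigma> \<kappa> M) (cps_top \<sigma> \<kappa> N)"
  by (induct rule: rtranclp_induct) (auto intro: equivclp_trans hjoin_imp_equivclp Estep_hjoin)

lemma E0_normal_head_var:
  assumes "\<not> is_val N" "\<not> is_mu N" "\<forall>N'. \<not> E0 N N'" "range \<sigma> \<subseteq> range LVar"
  shows "head_var (ecps \<sigma> \<kappa> N K)"
  using assms
proof (induct N arbitrary: K)
  case (App s t)
  show ?case
  proof (cases "is_val s")
    case s: True
    show ?thesis
    proof (cases "is_val t")
      case True
      with s App(5) obtain x where "s = Var x"
        using E0.beta_v[of t] by (cases s) auto
      moreover from App(6) have "\<sigma> x \<in> range LVar" by blast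
      ultimately show ?thesis using True by auto
    next
      case False
      have "\<not> is_mu t" using App(5) E0.app_mu[OF s] by (cases t) auto
      moreover have "\<forall>N'. \<not> E0 t N'" using App(5) E0.ctx_argR[OF s] by blast
      ultimately show ?thesis using s False App(2,6) by simp
    qed
  next
    case False
    have "\<not> is_mu s" using App(5) E0.mu_app by (cases s) auto
    moreover have "\<forall>N'. \<not> E0 s N'" using App(5) E0.ctx_funL by blast
    ultimately show ?thesis using False App(1,6) by simp
  qed
next
  case (Where L M)
  have "\<not> is_val M" using Where(5) E0.where_v by blast
  moreover have "\<not> is_mu M" using Where(5) E0.where_mu by (cases M) auto
  moreover have "\<forall>N'. \<not> E0 M N'" using Where(5) E0.ctx_where by blast
  ultimately show ?case using Where(2,6) by simp
qed auto

lemma E_normal_cps_top_hnf: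
  assumes "E_normal N" "range \<sigma> \<subseteq> range LVar" "range \<kappa> \<subseteq> range LVar"
  shows "\<exists>u. hstep\<^sup>*\<^sup>* (cps_top \<sigma> \<kappa> N) u \<and> hnf u"
proof (cases "is_mu N")
  case True
  then obtain J where "N = Mu J" by (cases N) auto
  moreover obtain l L where "J = Jump l L" by (cases J)
  ultimately have N: "N = Mu (Jump l L)" by simp
  define \<kappa>1 where "\<kappa>1 = (\<lambda>n. lsubst (env_under \<kappa> n) (LVar 0) 0)"
  have "range \<kappa>1 \<subseteq> range LVar"
    using assms(3) by (auto simp: \<kappa>1_def env_under_def image_subset_iff split: nat.split)
  moreover have "\<not> is_mu L"
  proof
    assume "is_mu L"
    then obtain J' where "L = Mu J'" by (cases L) auto
    with assms(1) show False using Estep.rename unfolding N E_normal_def by blast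
  qed
  moreover have "\<forall>L'. \<not> E0 L L'"
    using assms(1) Estep.under_mu unfolding N E_normal_def by blast
  moreover obtain i where "\<kappa>1 l = LVar i"
    using \<open>range \<kappa>1 \<subseteq> range LVar\<close> by blast
  ultimately have "hnf (LLam (ecps \<sigma> \<kappa>1 L (\<kappa>1 l)))"
    using assms(2) E0_normal_head_var by (cases "is_val L") (auto intro: hnf_if_head_var)
  moreover have "hstep (cps_top \<sigma> \<kappa> N) (LLam (ecps \<sigma> \<kappa>1 L (\<kappa>1 l)))"
    unfolding N \<kappa>1_def by (rule cps_top_Mu_hstep)
  ultimately show ?thesis by (blast intro: r_into_rtranclp)
next
  case False
  have "\<forall>N'. \<not> E0 N N'" using assms(1) Estep.top unfolding E_normal_def by blast
  with False assms(2) have "is_val N \<or> head_var (ecps \<sigma> \<kappa> N (LVar 0))"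
    using E0_normal_head_var by blast
  then have "hnf (cps_top \<sigma> \<kappa> N)"
    unfolding cps_top_def by (auto intro: hnf_if_head_var)
  then show ?thesis by blast
qed

lemma cbv_terminates_imp_solvable:
  assumes "cbv_terminates M" "range \<sigma> \<subseteq> range LVar" "range \<kappa> \<subseteq> range LVar"
  shows "solvable (cps_top \<sigma> \<kappa> M)"
proof -
  from assms(1) obtain N where "Estep\<^sup>*\<^sup>* M N" "E_normal N" unfolding cbv_terminates_def by blast
  moreover from \<open>E_normal N\<close> assms(2,3) obtain u where "hstep\<^sup>*\<^sup>* (cps_top \<sigma> \<kappa> N) u" "hnf u"
    using E_normal_cps_top_hnf by blast
  ultimately have "equivclp beta (cps_top \<sigma> \<kappa> M) u" "hnf u"
    by (blast intro: equivclp_trans Esteps_equivclp rtranclp_into_equivclp hsteps_imp_betas)+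
  then show ?thesis unfolding solvable_def by blast
qed

lemma hnf_in_imp_cbv_terminates: "hnf_in n (cps_top \<sigma> \<kappa> M) \<Longrightarrow> cbv_terminates M"
proof (induct "(n, admin_rank M)" arbitrary: n M rule: less_induct)
  case less
  show ?case
  proof (cases "E_normal M")
    case True
    then show ?thesis unfolding cbv_terminates_def by blast
  next
    case False
    then obtain N where "Estep M N" unfolding E_normal_def by blast
    with less.prems obtain m where "hnf_in m (cps_top \<sigma> \<kappa> N)"
        and "m < n \<or> m = n \<and> admin_rank N < admin_rank M"
      using hjoin_hnf_in Estep_hjoin by blast
    with less.hyps have "cbv_terminates N" by auto
    with \<open>Estep M N\<close> show ?thesis
      unfolding cbv_terminates_def by (blast intro: converse_rtranclp_into_rtranclp)
  qed
qed

theorem theorem2p31: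
  fixes M :: trm
  shows "cbv_terminates M \<longleftrightarrow> solvable (CPS M)"
proof
  have vars: "range (\<lambda>n. LVar (Suc (2 * n))) \<subseteq> range LVar"
    "range (\<lambda>n. LVar (Suc (2 * n + 1))) \<subseteq> range LVar" by auto
  assume "cbv_terminates M"
  with vars show "solvable (CPS M)"
    unfolding CPS_eq_cps_top by (intro cbv_terminates_imp_solvable)
next
  assume "solvable (CPS M)"
  then obtain n where "hnf_in n (CPS M)" by (auto simp: solvable_iff_hnf_in)
  then show "cbv_terminates M"
    unfolding CPS_eq_cps_top by (rule hnf_in_imp_cbv_terminates)
qed

end
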